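(* For all integers $k\ge1$ and $n\ge0$, \[ ov_k(n) = \frac{k}{2}\,\overline{M[k]}_2(n) - k\,\overline{M[2k]}_2(n). \]
   Context: An overpartition of $n$ is a non-increasing sequence of positive integers summing to $n$ in which the first occurrence of each integer may be overlined. $ov_k(n)$ denotes the sum of all overlined parts divisible by $k$, summed over all overpartitions of $n$. With $(a_1,\dots,a_r;q)_\infty = \prod_{i\ge0}(1-a_1q^i)\cdots(1-a_rq^i)$, $\overline{P}(q) = \frac{(-q;q)_\infty}{(q;q)_\infty}$ and $C(z;q) = \frac{(q;q)_\infty}{(zq,q/z;q)_\infty}$, define for each $j\ge1$ the numbers $\overline{M[j]}(m,n)$ by $(q^j;q^j)_\infty\,\overline{P}(q)\,C(z;q^j) = \sum_{n\ge0}\sum_{m\in\mathbb{Z}}\overline{M[j]}(m,n)z^mq^n$, and $\overline{M[j]}_2(n) = \sum_{m\in\mathbb{Z}} m^2\,\overline{M[j]}(m,n)$. *)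

theory Defs
  imports "HOL-Computational_Algebra.Formal_Power_Series"
          "HOL-Computational_Algebra.Formal_Laurent_Series"
begin

text \<open>An overpartition of n is encoded as a pair (xs, S): xs is the non-increasing
  list of positive parts summing to n, and S is the set of part values whose first
  occurrence is overlined (so S is a subset of the set of parts).\<close>

definition overpartitions :: "nat \<Rightarrow> (nat list \<times> nat set) set" where
  "overpartitions n = {(xs, S). sorted_wrt (\<ge>) xs \<and> (\<forall>x\<in>set xs. 0 < x)
       \<and> sum_list xs = n \<and> S \<subseteq> set xs}"

definition ov :: "nat \<Rightarrow> nat \<Rightarrow> nat" where
  "ov k n = (\<Sum>p\<in>overpartitions n. \<Sum>v\<in>{v \<in> snd p. k dvd v}. v)"

text \<open>Formal power series in q whose coefficients are formal Laurent series in z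
  (over the rationals).  Infinite products are limits of finite partial products
  in the standard (subdegree) metric on formal power series.\<close>

type_synonym zq_series = "rat fls fps"

definition fps_infprod :: "(nat \<Rightarrow> zq_series) \<Rightarrow> zq_series" where
  "fps_infprod f = lim (\<lambda>N. \<Prod>i<N. f i)"

text \<open>qpoch a d c = (a q^d; q^c)_\<infinity> = prod_{i>=0} (1 - a q^(d + c i)).\<close>

definition qpoch :: "rat fls \<Rightarrow> nat \<Rightarrow> nat \<Rightarrow> zq_series" where
  "qpoch a d c = fps_infprod (\<lambda>i. 1 - fps_const a * fps_X ^ (d + c * i))"

definition Pbar :: zq_series where
  "Pbar = qpoch (-1) 1 1 * inverse (qpoch 1 1 1)"

definition Cj :: "nat \<Rightarrow> zq_series" where
  "Cj j = qpoch 1 j j * inverse (qpoch fls_X j j * qpoch fls_X_inv j j)"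

definition GenM :: "nat \<Rightarrow> zq_series" where
  "GenM j = qpoch 1 j j * Pbar * Cj j"

definition Mbar :: "nat \<Rightarrow> int \<Rightarrow> nat \<Rightarrow> rat" where
  "Mbar j m n = fls_nth (fps_nth (GenM j) n) m"

text \<open>Mbar[j]_2(n) = sum over m in Z of m^2 Mbar[j](m,n); for fixed n only finitely
  many m contribute.\<close>

definition Mbar2 :: "nat \<Rightarrow> nat \<Rightarrow> rat" where
  "Mbar2 j n = (\<Sum>m | Mbar j m n \<noteq> 0. of_int m ^ 2 * Mbar j m n)"

end

theory Submission
  imports Defs
begin

(* For a q-series whose coefficients are Laurent polynomials in z, the k-th z-moments of the
   coefficients obey a Leibniz rule under multiplication.  Each factor
   (1 - q^a)^2 / ((1 - z q^a)(1 - q^a / z)) of (q^j;q^j)_oo C(z;q^j) has zeroth moment 1, first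
   moment 0 and second moment 2 q^a / (1 - q^a)^2; for such centred factors second moments add,
   so Mbar[j]_2(n) is the coefficient of q^n in 2 Pbar(q) sum_{i >= 1} q^(ij) / (1 - q^(ij))^2.
   On the combinatorial side, deleting an overlined part v is a bijection onto overpartitions
   of n - v in which v is not overlined, whence the overpartitions of n with v overlined have
   generating function Pbar(q) q^v / (1 + q^v).  Comparing coefficients of q^t, the theorem
   reduces to the divisor-sum identity
     sum_{k | v | t} v (-1)^(t/v + 1) = sum_{k | v | t} v - sum_{2k | w | t} w,
   which holds because w = 2v matches the divisors v with t/v even to those divisible by 2k. *)

unbundle Formal_Laurent_Series.fps_syntax

section \<open>Agreement of power series up to a degree\<close>

definition fps_eq_upto :: "nat \<Rightarrow> 'a fps \<Rightarrow> 'a fps \<Rightarrow> bool" where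
  "fps_eq_upto n F G \<longleftrightarrow> (\<forall>m\<le>n. F $ m = G $ m)"

lemma fps_eq_upto_refl [simp]: "fps_eq_upto n F F"
  by (simp add: fps_eq_upto_def)

lemma fps_eq_upto_sym: "fps_eq_upto n F G \<Longrightarrow> fps_eq_upto n G F"
  by (simp add: fps_eq_upto_def)

lemma fps_eq_upto_nth: "fps_eq_upto n F G \<Longrightarrow> F $ n = G $ n"
  by (simp add: fps_eq_upto_def)

lemma fps_eq_upto_mult:
  fixes F G :: "'a::comm_ring_1 fps"
  shows "fps_eq_upto n F F' \<Longrightarrow> fps_eq_upto n G G' \<Longrightarrow> fps_eq_upto n (F * G) (F' * G')"
  unfolding fps_eq_upto_def fps_mult_nth by (intro allI impI sum.cong) auto

lemma fps_eq_upto_inverse: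
  fixes F G :: "'a::field fps"
  assumes FG: "fps_eq_upto n F G" and G0: "G $ 0 \<noteq> 0"
  shows "fps_eq_upto n (inverse F) (inverse G)"
proof -
  have F0: "F $ 0 \<noteq> 0" using FG G0 by (simp add: fps_eq_upto_def)
  have "fps_eq_upto n (inverse F * (F * inverse G)) (inverse F * (G * inverse G))"
    by (intro fps_eq_upto_mult FG) simp_all
  with F0 G0 show ?thesis
    by (simp add: mult.assoc[symmetric] inverse_mult_eq_1 inverse_mult_eq_1' fps_eq_upto_sym)
qed

lemma fps_infprod_eq_upto:
  fixes f :: "nat \<Rightarrow> zq_series"
  assumes f: "\<And>i. fps_eq_upto i (f i) 1" and "n \<le> N"
  shows "fps_eq_upto n (fps_infprod f) (\<Prod>i<N. f i)"
proof -
  have stable: "fps_eq_upto m (\<Prod>i<N. f i) (\<Prod>i<m. f i)" if "m \<le> N" for m N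
    using that
  proof (induction N rule: dec_induct)
    case (step N)
    have "fps_eq_upto m (f N) 1"
      using f[of N] step.hyps by (simp add: fps_eq_upto_def)
    from fps_eq_upto_mult[OF step.IH this] show ?case
      by simp
  qed simp
  define P where "P = Abs_fps (\<lambda>m. (\<Prod>i<m. f i) $ m)"
  have "(\<lambda>N. \<Prod>i<N. f i) \<longlonglongrightarrow> P"
  proof (rule tendsto_fpsI)
    fix m
    show "eventually (\<lambda>N. (\<Prod>i<N. f i) $ m = P $ m) sequentially"
      unfolding eventually_sequentially using stable by (auto simp: P_def fps_eq_upto_def)
  qed
  hence "fps_infprod f = P"
    unfolding fps_infprod_def by (rule limI)
  thus ?thesis
    using stable \<open>n \<le> N\<close> by (auto simp: P_def fps_eq_upto_def)
qed

lemma qpoch_eq_upto: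
  assumes "1 \<le> c" "1 \<le> d" "n \<le> N"
  shows "fps_eq_upto n (qpoch a d c) (\<Prod>i<N. 1 - fps_const a * fps_X ^ (d + c * i))"
  unfolding qpoch_def
proof (rule fps_infprod_eq_upto[OF _ assms(3)])
  fix i
  have "i \<le> c * i" using assms by simp
  hence "i < d + c * i" using assms by linarith
  thus "fps_eq_upto i (1 - fps_const a * fps_X ^ (d + c * i)) 1"
    by (auto simp: fps_eq_upto_def)
qed

section \<open>Moments of Laurent series\<close>

definition fls_supp :: "'a::zero fls \<Rightarrow> int set" where
  "fls_supp f = {m. f $$ m \<noteq> 0}"

definition fls_moment :: "nat \<Rightarrow> 'a::comm_ring_1 fls \<Rightarrow> 'a" where
  "fls_moment k f = (\<Sum>m\<in>fls_supp f. of_int m ^ k * f $$ m)"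

lemma sum_fls_supp_superset:
  fixes f :: "'a::comm_ring_1 fls"
  assumes "finite A" "fls_supp f \<subseteq> A"
  shows "(\<Sum>m\<in>A. \<phi> m * f $$ m) = (\<Sum>m\<in>fls_supp f. \<phi> m * f $$ m)"
  using assms by (intro sum.mono_neutral_right) (auto simp: fls_supp_def)

lemma fls_supp_add: "fls_supp (f + g) \<subseteq> fls_supp f \<union> fls_supp g"
  by (auto simp: fls_supp_def)

lemma fls_supp_diff: "fls_supp (f - g) \<subseteq> fls_supp f \<union> fls_supp g"
  by (auto simp: fls_supp_def)

lemma fls_supp_uminus [simp]: "fls_supp (- f) = fls_supp f"
  by (simp add: fls_supp_def)

lemma fls_supp_const: "fls_supp (fls_const c) \<subseteq> {0}"
  by (auto simp: fls_supp_def)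

lemma finite_fls_supp_add [intro]:
  "finite (fls_supp f) \<Longrightarrow> finite (fls_supp g) \<Longrightarrow> finite (fls_supp (f + g))"
  by (meson finite_UnI fls_supp_add finite_subset)

lemma finite_fls_supp_diff [intro]:
  "finite (fls_supp f) \<Longrightarrow> finite (fls_supp g) \<Longrightarrow> finite (fls_supp (f - g))"
  by (meson finite_UnI fls_supp_diff finite_subset)

lemma fls_supp_0 [simp]: "fls_supp 0 = {}"
  by (simp add: fls_supp_def)

lemma finite_fls_supp_sum:
  fixes h :: "'b \<Rightarrow> 'a::comm_ring_1 fls"
  shows "(\<And>i. i \<in> A \<Longrightarrow> finite (fls_supp (h i))) \<Longrightarrow> finite (fls_supp (\<Sum>i\<in>A. h i))"
  by (induction A rule: infinite_finite_induct) auto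

lemma finite_fls_supp_const [intro]: "finite (fls_supp (fls_const c))"
  using fls_supp_const finite_subset by blast

lemma finite_fls_supp_1 [intro]: "finite (fls_supp 1)"
  using finite_fls_supp_const[of 1] by simp

lemma finite_fls_supp_X [intro]: "finite (fls_supp fls_X)"
  by (simp add: fls_supp_def fls_X_nth)

lemma finite_fls_supp_X_inv [intro]: "finite (fls_supp fls_X_inv)"
  by (simp add: fls_supp_def fls_X_inv_nth)

lemma fls_times_nth_supp:
  fixes f g :: "'a::comm_ring_1 fls"
  assumes A: "finite A" "fls_supp f \<subseteq> A"
  shows "(f * g) $$ n = (\<Sum>a\<in>A. f $$ a * g $$ (n - a))"
proof -
  define B where "B = {fls_subdegree f..n - fls_subdegree g}"
  have "finite B" by (simp add: B_def)
  have outside_B: "f $$ a * g $$ (n - a) = 0" if "a \<notin> B" for a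
  proof -
    have "a < fls_subdegree f \<or> n - a < fls_subdegree g"
      using that unfolding B_def atLeastAtMost_iff by linarith
    thus ?thesis by (metis fls_eq0_below_subdegree mult_zero_left mult_zero_right)
  qed
  have outside_A: "f $$ a * g $$ (n - a) = 0" if "a \<notin> A" for a
  proof -
    have "f $$ a = 0" using A(2) that unfolding fls_supp_def by blast
    thus ?thesis by simp
  qed
  have "(f * g) $$ n = (\<Sum>a\<in>B. f $$ a * g $$ (n - a))"
    unfolding B_def by (rule fls_times_nth(2))
  also have "\<dots> = (\<Sum>a\<in>A \<union> B. f $$ a * g $$ (n - a))"
    by (rule sum.mono_neutral_left) (use A outside_B \<open>finite B\<close> in auto)
  also have "\<dots> = (\<Sum>a\<in>A. f $$ a * g $$ (n - a))"
    by (rule sum.mono_neutral_right) (use A outside_A \<open>finite B\<close> in auto)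
  finally show ?thesis .
qed

lemma fls_supp_mult:
  fixes f g :: "'a::comm_ring_1 fls"
  assumes "finite (fls_supp f)"
  shows "fls_supp (f * g) \<subseteq> (\<lambda>(a, b). a + b) ` (fls_supp f \<times> fls_supp g)"
proof
  fix n assume "n \<in> fls_supp (f * g)"
  hence "(\<Sum>a\<in>fls_supp f. f $$ a * g $$ (n - a)) \<noteq> 0"
    using fls_times_nth_supp[OF assms order.refl] by (simp add: fls_supp_def)
  then obtain a where "f $$ a * g $$ (n - a) \<noteq> 0"
    by (meson sum.neutral)
  hence "a \<in> fls_supp f" "n - a \<in> fls_supp g"
    by (auto simp: fls_supp_def)
  thus "n \<in> (\<lambda>(a, b). a + b) ` (fls_supp f \<times> fls_supp g)"
    by (intro image_eqI[of _ _ "(a, n - a)"]) auto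
qed

lemma finite_fls_supp_mult [intro]:
  fixes f g :: "'a::comm_ring_1 fls"
  shows "finite (fls_supp f) \<Longrightarrow> finite (fls_supp g) \<Longrightarrow> finite (fls_supp (f * g))"
  using fls_supp_mult finite_subset by (metis finite_SigmaI finite_imageI)

lemma sum_fls_supp_mult:
  fixes f g :: "'a::comm_ring_1 fls"
  assumes f: "finite (fls_supp f)" and g: "finite (fls_supp g)"
  shows "(\<Sum>n\<in>fls_supp (f * g). \<phi> n * (f * g) $$ n) =
         (\<Sum>a\<in>fls_supp f. \<Sum>b\<in>fls_supp g. \<phi> (a + b) * (f $$ a * g $$ b))"
proof -
  define T where "T = (\<lambda>(a, b). a + b) ` (fls_supp f \<times> fls_supp g)"
  have T: "finite T" "fls_supp (f * g) \<subseteq> T"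
    using f g fls_supp_mult[OF f] by (auto simp: T_def)
  have shift: "(\<Sum>n\<in>T. \<phi> n * (f $$ a * g $$ (n - a))) =
               (\<Sum>b\<in>fls_supp g. \<phi> (a + b) * (f $$ a * g $$ b))" if a: "a \<in> fls_supp f" for a
  proof -
    have "(\<Sum>n\<in>T. \<phi> n * (f $$ a * g $$ (n - a))) =
          (\<Sum>b\<in>(\<lambda>n. n - a) ` T. (\<phi> (a + b) * f $$ a) * g $$ b)"
      by (subst sum.reindex) (simp_all add: inj_on_def mult.assoc)
    also have "\<dots> = (\<Sum>b\<in>fls_supp g. (\<phi> (a + b) * f $$ a) * g $$ b)"
    proof (rule sum_fls_supp_superset)
      show "fls_supp g \<subseteq> (\<lambda>n. n - a) ` T"
      proof
        fix b assume "b \<in> fls_supp g"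
        with a have "a + b \<in> T"
          unfolding T_def by (intro image_eqI[of _ _ "(a, b)"]) auto
        thus "b \<in> (\<lambda>n. n - a) ` T" by (intro image_eqI[of _ _ "a + b"]) auto
      qed
    qed (use T in auto)
    finally show ?thesis by (simp add: mult.assoc)
  qed
  have "(\<Sum>n\<in>fls_supp (f * g). \<phi> n * (f * g) $$ n) = (\<Sum>n\<in>T. \<phi> n * (f * g) $$ n)"
    using T by (rule sum_fls_supp_superset[symmetric])
  also have "\<dots> = (\<Sum>n\<in>T. \<Sum>a\<in>fls_supp f. \<phi> n * (f $$ a * g $$ (n - a)))"
    by (simp add: fls_times_nth_supp[OF f] sum_distrib_left)
  also have "\<dots> = (\<Sum>a\<in>fls_supp f. \<Sum>n\<in>T. \<phi> n * (f $$ a * g $$ (n - a)))"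
    by (rule sum.swap)
  also have "\<dots> = (\<Sum>a\<in>fls_supp f. \<Sum>b\<in>fls_supp g. \<phi> (a + b) * (f $$ a * g $$ b))"
    using shift by simp
  finally show ?thesis .
qed

lemma fls_moment_superset:
  fixes f :: "'a::comm_ring_1 fls"
  assumes "finite A" "fls_supp f \<subseteq> A"
  shows "fls_moment k f = (\<Sum>m\<in>A. of_int m ^ k * f $$ m)"
  unfolding fls_moment_def using assms by (rule sum_fls_supp_superset[symmetric])

lemma fls_moment_add:
  fixes f g :: "'a::comm_ring_1 fls"
  assumes "finite (fls_supp f)" "finite (fls_supp g)"
  shows "fls_moment k (f + g) = fls_moment k f + fls_moment k g"
proof -
  have "finite (fls_supp f \<union> fls_supp g)" using assms by simp
  with fls_supp_add[of f g] show ?thesis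
    by (simp add: fls_moment_superset[of "fls_supp f \<union> fls_supp g"] sum.distrib algebra_simps)
qed

lemma fls_moment_diff:
  fixes f g :: "'a::comm_ring_1 fls"
  assumes "finite (fls_supp f)" "finite (fls_supp g)"
  shows "fls_moment k (f - g) = fls_moment k f - fls_moment k g"
proof -
  have "finite (fls_supp f \<union> fls_supp g)" using assms by simp
  with fls_supp_diff[of f g] show ?thesis
    by (simp add: fls_moment_superset[of "fls_supp f \<union> fls_supp g"] sum_subtractf algebra_simps)
qed

lemma fls_moment_0 [simp]: "fls_moment k 0 = 0"
  by (simp add: fls_moment_def)

lemma fls_moment_sum:
  fixes h :: "'b \<Rightarrow> 'a::comm_ring_1 fls"
  shows "(\<And>i. i \<in> A \<Longrightarrow> finite (fls_supp (h i))) \<Longrightarrow>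
    fls_moment k (\<Sum>i\<in>A. h i) = (\<Sum>i\<in>A. fls_moment k (h i))"
  by (induction A rule: infinite_finite_induct) (simp_all add: fls_moment_add finite_fls_supp_sum)

lemma fls_moment_const: "fls_moment k (fls_const c) = (if k = 0 then c else 0)"
  by (subst fls_moment_superset[of "{0}"]) (simp_all add: fls_supp_const zero_power)

lemma fls_moment_1: "fls_moment k (1 :: 'a::comm_ring_1 fls) = (if k = 0 then 1 else 0)"
  using fls_moment_const[of k 1] by simp

lemma fls_moment_X: "fls_moment k fls_X = 1"
  by (subst fls_moment_superset[of "{1}"]) (auto simp: fls_supp_def fls_X_nth)

lemma fls_moment_X_inv: "fls_moment k fls_X_inv = (-1) ^ k"
  by (subst fls_moment_superset[of "{-1}"]) (auto simp: fls_supp_def fls_X_inv_nth)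

lemma fls_moment_mult:
  fixes f g :: "'a::comm_ring_1 fls"
  assumes f: "finite (fls_supp f)" and g: "finite (fls_supp g)"
  shows "fls_moment k (f * g) =
    (\<Sum>i\<le>k. of_nat (k choose i) * fls_moment i f * fls_moment (k - i) g)"
proof -
  have "fls_moment k (f * g) =
      (\<Sum>a\<in>fls_supp f. \<Sum>b\<in>fls_supp g. \<Sum>i\<le>k.
         of_nat (k choose i) * ((of_int a ^ i * f $$ a) * (of_int b ^ (k - i) * g $$ b)))"
    unfolding fls_moment_def sum_fls_supp_mult[OF f g] of_int_add binomial_ring
    by (intro sum.cong refl) (simp add: sum_distrib_left sum_distrib_right mult_ac)
  also have "\<dots> = (\<Sum>i\<le>k. \<Sum>a\<in>fls_supp f. \<Sum>b\<in>fls_supp g.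
         of_nat (k choose i) * ((of_int a ^ i * f $$ a) * (of_int b ^ (k - i) * g $$ b)))"
    by (simp only: sum.swap[where A = "fls_supp g" and B = "{..k}"]
        sum.swap[where A = "fls_supp f" and B = "{..k}"])
  also have "\<dots> = (\<Sum>i\<le>k. of_nat (k choose i) * fls_moment i f * fls_moment (k - i) g)"
    by (simp only: fls_moment_def mult.assoc sum_product) (simp only: sum_distrib_left)
  finally show ?thesis .
qed

section \<open>Moments of q-series with Laurent coefficients\<close>

definition fin_supp_coeffs :: "'a::zero fls fps \<Rightarrow> bool" where
  "fin_supp_coeffs F \<longleftrightarrow> (\<forall>n. finite (fls_supp (F $ n)))"

definition fps_moment :: "nat \<Rightarrow> 'a::comm_ring_1 fls fps \<Rightarrow> 'a fps" where
  "fps_moment k F = Abs_fps (\<lambda>n. fls_moment k (F $ n))"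

lemma fps_moment_nth [simp]: "fps_moment k F $ n = fls_moment k (F $ n)"
  by (simp add: fps_moment_def)

lemma fin_supp_coeffs_mult [intro]:
  fixes F G :: "'a::comm_ring_1 fls fps"
  shows "fin_supp_coeffs F \<Longrightarrow> fin_supp_coeffs G \<Longrightarrow> fin_supp_coeffs (F * G)"
  unfolding fin_supp_coeffs_def fps_mult_nth by (auto intro!: finite_fls_supp_sum)

lemma fin_supp_coeffs_diff [intro]:
  fixes F G :: "'a::comm_ring_1 fls fps"
  shows "fin_supp_coeffs F \<Longrightarrow> fin_supp_coeffs G \<Longrightarrow> fin_supp_coeffs (F - G)"
  unfolding fin_supp_coeffs_def by auto

lemma fin_supp_coeffs_1 [intro]: "fin_supp_coeffs (1 :: 'a::comm_ring_1 fls fps)"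
  unfolding fin_supp_coeffs_def by (auto simp: fps_one_nth)

lemma fin_supp_coeffs_monom [intro]:
  fixes c :: "'a::comm_ring_1 fls"
  shows "finite (fls_supp c) \<Longrightarrow> fin_supp_coeffs (fps_const c * fps_X ^ e)"
  unfolding fin_supp_coeffs_def by auto

lemma fin_supp_coeffs_inverse:
  fixes F :: "'a::field fls fps"
  assumes F: "fin_supp_coeffs F" and F0: "F $ 0 = 1"
  shows "fin_supp_coeffs (inverse F)"
proof -
  have "finite (fls_supp (natfun_inverse F n))" for n
  proof (induction n rule: less_induct)
    case (less n)
    show ?case
    proof (cases n)
      case (Suc m)
      have fin: "finite (fls_supp (\<Sum>i = 1..Suc m. F $ i * natfun_inverse F (Suc m - i)))"
        using F less Suc unfolding fin_supp_coeffs_def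
        by (intro finite_fls_supp_sum finite_fls_supp_mult) auto
      have "natfun_inverse F (Suc m) = - (\<Sum>i = 1..Suc m. F $ i * natfun_inverse F (Suc m - i))"
        using F0 by (simp del: sum.atLeast_Suc_atMost sum.cl_ivl_Suc)
      thus ?thesis
        unfolding Suc using fin by (simp only: fls_supp_uminus)
    qed (simp add: F0 fls_supp_def)
  qed
  thus ?thesis
    by (simp add: fin_supp_coeffs_def fps_inverse_def)
qed

lemma fps_moment_diff:
  fixes F G :: "'a::comm_ring_1 fls fps"
  shows "fin_supp_coeffs F \<Longrightarrow> fin_supp_coeffs G \<Longrightarrow>
    fps_moment k (F - G) = fps_moment k F - fps_moment k G"
  unfolding fin_supp_coeffs_def by (intro fps_ext) (simp add: fls_moment_diff)

lemma fps_moment_1: "fps_moment k (1 :: 'a::comm_ring_1 fls fps) = (if k = 0 then 1 else 0)"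
  by (intro fps_ext) (simp add: fps_one_nth fls_moment_1)

lemma fps_moment_monom:
  "fps_moment k (fps_const c * fps_X ^ e) = fps_const (fls_moment k c) * fps_X ^ e"
  by (intro fps_ext) simp

lemma fps_moment_one_minus_monom:
  fixes c :: "'a::comm_ring_1 fls"
  assumes "finite (fls_supp c)"
  shows "fps_moment k (1 - fps_const c * fps_X ^ e) =
    (if k = 0 then 1 else 0) - fps_const (fls_moment k c) * fps_X ^ e"
  using assms by (simp add: fps_moment_diff fin_supp_coeffs_1 fin_supp_coeffs_monom fps_moment_1
    fps_moment_monom)

lemma fps_moment_mult:
  fixes F G :: "'a::comm_ring_1 fls fps"
  assumes "fin_supp_coeffs F" "fin_supp_coeffs G"
  shows "fps_moment k (F * G) =
    (\<Sum>i\<le>k. fps_const (of_nat (k choose i)) * fps_moment i F * fps_moment (k - i) G)"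
proof (rule fps_ext)
  fix n
  have "fls_moment k ((F * G) $ n) =
      (\<Sum>j = 0..n. \<Sum>i\<le>k.
         of_nat (k choose i) * fls_moment i (F $ j) * fls_moment (k - i) (G $ (n - j)))"
    using assms unfolding fps_mult_nth fin_supp_coeffs_def
    by (simp add: fls_moment_sum finite_fls_supp_mult fls_moment_mult)
  also have "\<dots> = (\<Sum>i\<le>k. of_nat (k choose i) * (fps_moment i F * fps_moment (k - i) G) $ n)"
    by (subst sum.swap) (simp add: fps_mult_nth sum_distrib_left mult.assoc)
  finally show "fps_moment k (F * G) $ n =
      (\<Sum>i\<le>k. fps_const (of_nat (k choose i)) * fps_moment i F * fps_moment (k - i) G) $ n"
    by (simp add: fps_sum_nth mult.assoc)
qed

lemma fps_moment_mult_012: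
  fixes F G :: "'a::comm_ring_1 fls fps"
  assumes "fin_supp_coeffs F" "fin_supp_coeffs G"
  shows "fps_moment 0 (F * G) = fps_moment 0 F * fps_moment 0 G"
    and "fps_moment 1 (F * G) = fps_moment 0 F * fps_moment 1 G + fps_moment 1 F * fps_moment 0 G"
    and "fps_moment 2 (F * G) = fps_moment 0 F * fps_moment 2 G
           + 2 * fps_moment 1 F * fps_moment 1 G + fps_moment 2 F * fps_moment 0 G"
  using fps_moment_mult[OF assms, of 0] fps_moment_mult[OF assms, of 1]
    fps_moment_mult[OF assms, of 2]
  by (simp_all add: numeral_2_eq_2 numeral_fps_const)

definition fps_fls_const :: "'a::zero fps \<Rightarrow> 'a fls fps" where
  "fps_fls_const p = Abs_fps (\<lambda>n. fls_const (p $ n))"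

lemma fps_fls_const_nth [simp]: "fps_fls_const p $ n = fls_const (p $ n)"
  by (simp add: fps_fls_const_def)

lemma fls_const_sum: "fls_const (\<Sum>i\<in>A. f i) = (\<Sum>i\<in>A. fls_const (f i :: 'a::comm_monoid_add))"
  by (induction A rule: infinite_finite_induct) (simp_all flip: fls_plus_const)

lemma fps_fls_const_mult:
  "fps_fls_const (p * q) = fps_fls_const p * fps_fls_const (q :: 'a::comm_ring_1 fps)"
  by (intro fps_ext) (simp add: fps_mult_nth fls_const_sum)

lemma fps_fls_const_add [simp]:
  "fps_fls_const (p + q) = fps_fls_const p + fps_fls_const (q :: 'a::comm_monoid_add fps)"
  by (intro fps_ext) (simp add: fls_plus_const)

lemma fps_fls_const_diff [simp]:
  "fps_fls_const (p - q) = fps_fls_const p - fps_fls_const (q :: 'a::ab_group_add fps)"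
  by (intro fps_ext) (simp add: fls_minus_const)

lemma fps_fls_const_X_power [simp]:
  "fps_fls_const (fps_X ^ e) = (fps_X ^ e :: 'a::comm_ring_1 fls fps)"
  by (intro fps_ext) (simp add: fps_X_power_nth)

lemma fps_fls_const_1 [simp]: "fps_fls_const (1 :: 'a::comm_ring_1 fps) = 1"
  by (intro fps_ext) (simp add: fps_one_nth)

lemma fps_fls_const_prod:
  "fps_fls_const (\<Prod>i\<in>A. f i) = (\<Prod>i\<in>A. fps_fls_const (f i :: 'a::comm_ring_1 fps))"
  by (induction A rule: infinite_finite_induct) (simp_all add: fps_fls_const_mult)

lemma fps_fls_const_inverse:
  fixes p :: "'a::field fps"
  assumes "p $ 0 \<noteq> 0"
  shows "fps_fls_const (inverse p) = inverse (fps_fls_const p)"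
proof -
  have "fps_fls_const p * fps_fls_const (inverse p) = 1"
    using assms by (simp flip: fps_fls_const_mult add: inverse_mult_eq_1')
  thus ?thesis by (rule fps_inverse_unique[symmetric])
qed

lemma fin_supp_coeffs_fps_fls_const [intro]: "fin_supp_coeffs (fps_fls_const p)"
  unfolding fin_supp_coeffs_def by auto

lemma fps_moment_fps_fls_const:
  "fps_moment k (fps_fls_const p) = (if k = 0 then p else 0)"
  by (intro fps_ext) (simp add: fls_moment_const)

lemma fps_moment_fps_fls_const_mult:
  fixes F :: "'a::comm_ring_1 fls fps"
  assumes "fin_supp_coeffs F"
  shows "fps_moment k (fps_fls_const p * F) = p * fps_moment k F"
  by (simp add: fps_moment_mult[OF fin_supp_coeffs_fps_fls_const assms]
      fps_moment_fps_fls_const sum.atMost_shift)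

text \<open>Read as a distribution in the exponent of z, a centered series has total mass 1 and
  mean 0, so its second moment (variance) is additive under multiplication.\<close>

definition centered :: "'a::comm_ring_1 fls fps \<Rightarrow> bool" where
  "centered F \<longleftrightarrow> fin_supp_coeffs F \<and> fps_moment 0 F = 1 \<and> fps_moment 1 F = 0"

lemma centered_mult:
  fixes F G :: "'a::comm_ring_1 fls fps"
  assumes "centered F" "centered G"
  shows "centered (F * G)"
    and "fps_moment 2 (F * G) = fps_moment 2 F + fps_moment 2 G"
  using assms fps_moment_mult_012[of F G] by (auto simp: centered_def)

lemma centered_prod:
  fixes F :: "'b \<Rightarrow> 'a::comm_ring_1 fls fps"
  assumes "\<And>i. i \<in> A \<Longrightarrow> centered (F i)"
  shows "centered (\<Prod>i\<in>A. F i)"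
    and "fps_moment 2 (\<Prod>i\<in>A. F i) = (\<Sum>i\<in>A. fps_moment 2 (F i))"
proof -
  have "centered (\<Prod>i\<in>A. F i) \<and> fps_moment 2 (\<Prod>i\<in>A. F i) = (\<Sum>i\<in>A. fps_moment 2 (F i))"
    using assms
  proof (induction A rule: infinite_finite_induct)
    case (insert x A)
    thus ?case using centered_mult[of "F x" "\<Prod>i\<in>A. F i"] by simp
  qed (auto simp: centered_def fps_moment_1)
  thus "centered (\<Prod>i\<in>A. F i)" "fps_moment 2 (\<Prod>i\<in>A. F i) = (\<Sum>i\<in>A. fps_moment 2 (F i))"
    by auto
qed

lemma centered_inverse:
  fixes F :: "'a::field fls fps"
  assumes F: "centered F" and F0: "F $ 0 = 1"
  shows "centered (inverse F)"
    and "fps_moment 2 (inverse F) = - fps_moment 2 F"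
proof -
  have fin: "fin_supp_coeffs F" "fin_supp_coeffs (inverse F)"
    using F F0 fin_supp_coeffs_inverse by (auto simp: centered_def)
  have "F * inverse F = 1"
    using F0 by (simp add: inverse_mult_eq_1')
  hence 0: "fps_moment 0 (inverse F) = 1"
    and 1: "fps_moment 1 (inverse F) = 0"
    and 2: "fps_moment 2 F + fps_moment 2 (inverse F) = 0"
    using fps_moment_mult_012[OF fin] F by (auto simp: centered_def fps_moment_1 add.commute)
  show "centered (inverse F)"
    using fin 0 1 by (simp add: centered_def)
  show "fps_moment 2 (inverse F) = - fps_moment 2 F"
    using 2 by (simp add: eq_neg_iff_add_eq_0 add.commute)
qed

section \<open>The second crank moment\<close>

definition fps_dilated :: "nat \<Rightarrow> (nat \<Rightarrow> 'a::zero) \<Rightarrow> 'a fps" where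
  "fps_dilated a \<phi> = Abs_fps (\<lambda>t. if a dvd t then \<phi> (t div a) else 0)"

lemma fps_dilated_nth: "fps_dilated a \<phi> $ t = (if a dvd t then \<phi> (t div a) else 0)"
  by (simp add: fps_dilated_def)

lemma fps_dilated_mult_one_minus:
  fixes \<phi> :: "nat \<Rightarrow> 'a::comm_ring_1"
  assumes a: "0 < a"
  shows "fps_dilated a \<phi> * (1 - fps_const c * fps_X ^ a) =
         fps_dilated a (\<lambda>u. \<phi> u - c * (if u = 0 then 0 else \<phi> (u - 1)))"
proof (rule fps_ext)
  fix t
  have "fps_dilated a \<phi> * (1 - fps_const c * fps_X ^ a) =
        fps_dilated a \<phi> - fps_const c * (fps_dilated a \<phi> * fps_X ^ a)"
    by (simp only: right_diff_distrib mult_1_right mult.left_commute)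
  hence "(fps_dilated a \<phi> * (1 - fps_const c * fps_X ^ a)) $ t =
        fps_dilated a \<phi> $ t - c * (if t < a then 0 else fps_dilated a \<phi> $ (t - a))"
    by (simp only: fps_sub_nth fps_mult_left_const_nth fps_X_power_mult_right_nth)
  also have "\<dots> = fps_dilated a (\<lambda>u. \<phi> u - c * (if u = 0 then 0 else \<phi> (u - 1))) $ t"
  proof (cases "t < a")
    case True
    hence "a dvd t \<longleftrightarrow> t = 0"
      using a by (auto dest: dvd_imp_le)
    thus ?thesis
      using True by (simp add: fps_dilated_nth)
  next
    case False
    hence "a dvd t - a \<longleftrightarrow> a dvd t" "t div a = Suc ((t - a) div a)"
      using a by (simp_all add: dvd_minus_self le_div_geq)
    thus ?thesis
      using False by (simp add: fps_dilated_nth)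
  qed
  finally show "(fps_dilated a \<phi> * (1 - fps_const c * fps_X ^ a)) $ t =
      fps_dilated a (\<lambda>u. \<phi> u - c * (if u = 0 then 0 else \<phi> (u - 1))) $ t" .
qed

lemma fps_X_power_eq_dilated:
  assumes "0 < a"
  shows "fps_X ^ a = (fps_dilated a (\<lambda>u. if u = 1 then 1 else 0) :: 'a::comm_ring_1 fps)"
proof (rule fps_ext)
  fix t
  have "(a dvd t \<and> t div a = 1) \<longleftrightarrow> t = a"
    using assms by auto
  thus "fps_X ^ a $ t = fps_dilated a (\<lambda>u. if u = 1 then 1 else 0) $ t"
    by (auto simp: fps_dilated_nth fps_X_power_nth)
qed

lemma fps_eq_mult_inverse:
  fixes f g h :: "'a::field fps"
  assumes "f * h = g" "h $ 0 \<noteq> 0"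
  shows "f = g * inverse h"
proof -
  have "f = f * (h * inverse h)"
    using assms(2) by (simp add: inverse_mult_eq_1')
  also have "\<dots> = g * inverse h"
    by (simp only: mult.assoc[symmetric] assms(1))
  finally show ?thesis .
qed

lemma fps_dilated_of_nat:
  assumes a: "0 < a"
  shows "fps_dilated a of_nat = fps_X ^ a * inverse ((1 - fps_X ^ a) ^ 2 :: 'a::field fps)"
proof (rule fps_eq_mult_inverse)
  have one_minus: "(1 - fps_X ^ a :: 'a fps) = 1 - fps_const 1 * fps_X ^ a"
    by simp
  have "fps_dilated a of_nat * (1 - fps_X ^ a) = fps_dilated a (\<lambda>u. if u = 0 then 0 else 1 :: 'a)"
    unfolding one_minus fps_dilated_mult_one_minus[OF a]
    by (intro arg_cong[where f = "fps_dilated a"] ext) (simp add: of_nat_diff)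
  also have "\<dots> * (1 - fps_X ^ a) = fps_dilated a (\<lambda>u. if u = 1 then 1 else 0)"
    unfolding one_minus fps_dilated_mult_one_minus[OF a]
    by (intro arg_cong[where f = "fps_dilated a"] ext) simp
  also have "\<dots> = fps_X ^ a"
    by (rule fps_X_power_eq_dilated[OF a, symmetric])
  finally show "fps_dilated a of_nat * (1 - fps_X ^ a) ^ 2 = (fps_X ^ a :: 'a fps)"
    by (simp only: power2_eq_square mult.assoc)
qed (use a in simp)

lemma fps_dilated_alternating:
  assumes a: "0 < a"
  shows "fps_dilated a (\<lambda>u. if u = 0 then 0 else (-1) ^ (u + 1)) =
         fps_X ^ a * inverse (1 + fps_X ^ a :: 'a::field fps)"
proof (rule fps_eq_mult_inverse)
  have one_plus: "(1 + fps_X ^ a :: 'a fps) = 1 - fps_const (-1) * fps_X ^ a"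
    by simp
  have "fps_dilated a (\<lambda>u. if u = 0 then 0 else (-1) ^ (u + 1)) * (1 + fps_X ^ a) =
      fps_dilated a (\<lambda>u. if u = 1 then 1 else 0 :: 'a)"
    unfolding one_plus fps_dilated_mult_one_minus[OF a]
    by (intro arg_cong[where f = "fps_dilated a"] ext) (auto simp: neq0_conv gr0_conv_Suc)
  also have "\<dots> = fps_X ^ a"
    by (rule fps_X_power_eq_dilated[OF a, symmetric])
  finally show "fps_dilated a (\<lambda>u. if u = 0 then 0 else (-1) ^ (u + 1)) * (1 + fps_X ^ a) =
      (fps_X ^ a :: 'a fps)" .
qed (use a in simp)

lemma fps_prod_nth_0: "(\<Prod>i\<in>A. f i) $ 0 = (\<Prod>i\<in>A. f i $ 0 :: 'a::comm_ring_1)"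
  by (induction A rule: infinite_finite_induct) auto

lemma fps_inverse_prod: "inverse (\<Prod>i\<in>A. f i) = (\<Prod>i\<in>A. inverse (f i) :: 'a::field fps)"
  by (induction A rule: infinite_finite_induct) (simp_all add: fps_inverse_mult)

definition crank_factor :: "nat \<Rightarrow> 'a::field fls fps" where
  "crank_factor a = fps_fls_const ((1 - fps_X ^ a) ^ 2) *
     inverse ((1 - fps_const fls_X * fps_X ^ a) * (1 - fps_const fls_X_inv * fps_X ^ a))"

lemma crank_factor_moments:
  assumes a: "0 < a"
  shows "centered (crank_factor a :: 'a::field fls fps)"
    and "fps_moment 2 (crank_factor a :: 'a fls fps) = 2 * fps_dilated a of_nat"
proof -
  define c :: "'a fps" where "c = (1 - fps_X ^ a) ^ 2"
  define Y :: "'a fls fps" where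
    "Y = (1 - fps_const fls_X * fps_X ^ a) * (1 - fps_const fls_X_inv * fps_X ^ a)"
  define Z where "Z = fps_fls_const (inverse c) * Y"
  have c0: "c $ 0 = 1" and Y0: "Y $ 0 = 1"
    using a by (simp_all add: c_def Y_def fps_power_zeroth zero_power)
  have fin: "fin_supp_coeffs (1 - fps_const fls_X * fps_X ^ a :: 'a fls fps)"
    "fin_supp_coeffs (1 - fps_const fls_X_inv * fps_X ^ a :: 'a fls fps)" "fin_supp_coeffs Y"
    by (auto simp: Y_def)
  have Y_moments: "fps_moment 0 Y = c" "fps_moment 1 Y = 0" "fps_moment 2 Y = - 2 * fps_X ^ a"
    unfolding Y_def fps_moment_mult_012[OF fin(1,2)]
    by (simp_all add: fps_moment_one_minus_monom finite_fls_supp_X finite_fls_supp_X_inv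
        fls_moment_X fls_moment_X_inv c_def power2_eq_square algebra_simps)
  have inv_c: "inverse c * c = 1"
    using c0 by (simp add: inverse_mult_eq_1)
  have Z_moments: "fps_moment k Z = inverse c * fps_moment k Y" for k
    unfolding Z_def using fin(3) by (rule fps_moment_fps_fls_const_mult)
  have "fin_supp_coeffs Z"
    unfolding Z_def using fin(3) by blast
  hence Z: "centered Z" "fps_moment 2 Z = - 2 * fps_dilated a of_nat"
    unfolding centered_def Z_moments Y_moments fps_dilated_of_nat[OF a] c_def
    using inv_c by (simp_all add: c_def)
  have "crank_factor a = inverse Z"
    using c0 by (simp add: crank_factor_def Z_def Y_def c_def fps_inverse_mult
        fps_fls_const_inverse mult.commute)
  moreover have "Z $ 0 = 1"
    using c0 Y0 by (simp add: Z_def)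
  ultimately show "centered (crank_factor a :: 'a fls fps)"
    and "fps_moment 2 (crank_factor a :: 'a fls fps) = 2 * fps_dilated a of_nat"
    using centered_inverse[OF Z(1)] Z(2) by simp_all
qed

definition pbar_prod :: "nat \<Rightarrow> 'a::field fps" where
  "pbar_prod N = (\<Prod>i<N. 1 + fps_X ^ Suc i) * inverse (\<Prod>i<N. 1 - fps_X ^ Suc i)"

lemma GenM_eq_upto:
  assumes j: "1 \<le> j"
  shows "fps_eq_upto n (GenM j) (fps_fls_const (pbar_prod n) * (\<Prod>i<n. crank_factor (j * Suc i)))"
proof -
  define Qj :: "rat fps" where "Qj = (\<Prod>i<n. 1 - fps_X ^ (j * Suc i))"
  define Q1 :: "rat fps" where "Q1 = (\<Prod>i<n. 1 - fps_X ^ Suc i)"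
  define P1 :: "rat fps" where "P1 = (\<Prod>i<n. 1 + fps_X ^ Suc i)"
  define Xz :: zq_series where "Xz = (\<Prod>i<n. 1 - fps_const fls_X * fps_X ^ (j * Suc i))"
  define Xzi :: zq_series where "Xzi = (\<Prod>i<n. 1 - fps_const fls_X_inv * fps_X ^ (j * Suc i))"
  have Q1_0: "Q1 $ 0 = 1" and Xz_0: "Xz $ 0 = 1" "Xzi $ 0 = 1"
    using j by (simp_all add: Q1_def Xz_def Xzi_def fps_prod_nth_0)
  have "fps_eq_upto n (qpoch 1 j j) (fps_fls_const Qj)"
    using qpoch_eq_upto[of j j n n 1] j by (simp add: Qj_def fps_fls_const_prod algebra_simps)
  moreover have "fps_eq_upto n (qpoch (-1) 1 1) (fps_fls_const P1)"
    using qpoch_eq_upto[of 1 1 n n "-1"]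
    by (simp add: P1_def fps_fls_const_prod del: power_Suc flip: fps_const_neg)
  moreover have "fps_eq_upto n (qpoch 1 1 1) (fps_fls_const Q1)"
    using qpoch_eq_upto[of 1 1 n n 1] by (simp add: Q1_def fps_fls_const_prod del: power_Suc)
  moreover have "fps_eq_upto n (qpoch fls_X j j) Xz" "fps_eq_upto n (qpoch fls_X_inv j j) Xzi"
    using qpoch_eq_upto[of j j n n] j by (simp_all add: Xz_def Xzi_def algebra_simps)
  ultimately have "fps_eq_upto n (GenM j)
      (fps_fls_const Qj * (fps_fls_const P1 * inverse (fps_fls_const Q1)) *
       (fps_fls_const Qj * inverse (Xz * Xzi)))"
    unfolding GenM_def Pbar_def Cj_def
    by (intro fps_eq_upto_mult fps_eq_upto_inverse) (simp_all add: Q1_0 Xz_0)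
  also have "fps_fls_const Qj * (fps_fls_const P1 * inverse (fps_fls_const Q1)) *
       (fps_fls_const Qj * inverse (Xz * Xzi)) =
      fps_fls_const (pbar_prod n) * (\<Prod>i<n. crank_factor (j * Suc i))"
    using Q1_0 by (simp add: pbar_prod_def crank_factor_def prod.distrib fps_fls_const_prod
        fps_fls_const_mult fps_fls_const_inverse fps_inverse_prod fps_inverse_mult power2_eq_square
        Qj_def Q1_def P1_def Xz_def Xzi_def mult_ac)
  finally show ?thesis .
qed

lemma Mbar2_eq:
  assumes "1 \<le> j"
  shows "Mbar2 j n = (2 * pbar_prod n * (\<Sum>i<n. fps_dilated (j * Suc i) of_nat)) $ n"
proof -
  have crank: "centered (crank_factor (j * Suc i) :: zq_series)"
    "fps_moment 2 (crank_factor (j * Suc i) :: zq_series) = 2 * fps_dilated (j * Suc i) of_nat"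
    for i
    using assms by (simp_all add: crank_factor_moments)
  have "Mbar2 j n = fps_moment 2 (GenM j) $ n"
    by (simp add: Mbar2_def Mbar_def fls_moment_def fls_supp_def)
  also have "\<dots> =
      fps_moment 2 (fps_fls_const (pbar_prod n) * (\<Prod>i<n. crank_factor (j * Suc i))) $ n"
    using fps_eq_upto_nth[OF GenM_eq_upto[OF assms]] by simp
  also have "\<dots> = (pbar_prod n * (\<Sum>i<n. 2 * fps_dilated (j * Suc i) of_nat)) $ n"
    using centered_prod[of "{..<n}", OF crank(1)] crank(2)
    by (simp add: fps_moment_fps_fls_const_mult centered_def)
  finally show ?thesis
    by (simp add: sum_distrib_left mult_ac)
qed

section \<open>Overpartitions with a prescribed overlined part\<close>

definition overpartitions_bounded :: "nat \<Rightarrow> nat \<Rightarrow> (nat multiset \<times> nat set) set" where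
  "overpartitions_bounded m s =
     {(M, S). (\<forall>x\<in>#M. 0 < x \<and> x \<le> m) \<and> sum_mset M = s \<and> S \<subseteq> set_mset M}"

lemma size_le_sum_mset: "(\<forall>x\<in>#M. 0 < x) \<Longrightarrow> size M \<le> sum_mset (M :: nat multiset)"
  by (induction M) auto

lemma finite_overpartitions_bounded: "finite (overpartitions_bounded m s)"
proof (rule finite_subset)
  show "overpartitions_bounded m s \<subseteq> (\<Union>n\<in>{..s}. multisets_of_size {..m} n) \<times> Pow {..m}"
  proof
    fix p assume "p \<in> overpartitions_bounded m s"
    then obtain M S where p: "p = (M, S)" "\<forall>x\<in>#M. 0 < x \<and> x \<le> m" "sum_mset M = s"
      "S \<subseteq> set_mset M"
      by (auto simp: overpartitions_bounded_def)
    have "size M \<le> s" "set_mset M \<subseteq> {..m}"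
      using size_le_sum_mset[of M] p by auto
    thus "p \<in> (\<Union>n\<in>{..s}. multisets_of_size {..m} n) \<times> Pow {..m}"
      using p by (auto simp: multisets_of_size_def)
  qed
qed auto

lemma overpartitions_bounded_0: "overpartitions_bounded 0 s = (if s = 0 then {({#}, {})} else {})"
proof -
  have empty: "M = {#}" if "\<forall>x\<in>#M. 0 < x \<and> x \<le> (0::nat)" for M
    using that by (cases M) auto
  have "(M, S) \<in> overpartitions_bounded 0 s \<longleftrightarrow> M = {#} \<and> S = {} \<and> s = 0" for M S
    using empty[of M] by (auto simp: overpartitions_bounded_def)
  thus ?thesis
    by auto
qed

lemma overpartitions_bounded_without_max:
  assumes m: "1 \<le> m"
  shows "{p \<in> overpartitions_bounded m s. m \<notin># fst p} = overpartitions_bounded (m - 1) s"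
proof -
  have parts: "(\<forall>x\<in>#M. 0 < x \<and> x \<le> m) \<and> m \<notin># M \<longleftrightarrow> (\<forall>x\<in>#M. 0 < x \<and> x \<le> m - 1)"
    for M :: "nat multiset"
  proof
    assume M: "(\<forall>x\<in>#M. 0 < x \<and> x \<le> m) \<and> m \<notin># M"
    show "\<forall>x\<in>#M. 0 < x \<and> x \<le> m - 1"
    proof
      fix x assume "x \<in># M"
      with M have "0 < x" "x \<le> m" "x \<noteq> m"
        by auto
      thus "0 < x \<and> x \<le> m - 1"
        by linarith
    qed
  next
    assume M: "\<forall>x\<in>#M. 0 < x \<and> x \<le> m - 1"
    have "m \<notin># M"
    proof
      assume "m \<in># M"
      with M have "m \<le> m - 1" by blast
      with m show False by linarith
    qed
    with M show "(\<forall>x\<in>#M. 0 < x \<and> x \<le> m) \<and> m \<notin># M"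
      by auto
  qed
  show ?thesis
  proof (rule set_eqI)
    fix p :: "nat multiset \<times> nat set"
    obtain M S where p: "p = (M, S)"
      by (cases p)
    show "p \<in> {p \<in> overpartitions_bounded m s. m \<notin># fst p} \<longleftrightarrow> p \<in> overpartitions_bounded (m - 1) s"
      unfolding p overpartitions_bounded_def using parts[of M] by auto
  qed
qed

lemma remove_part_overpartitions_bounded:
  assumes p: "(M, S) \<in> overpartitions_bounded m s" and v: "v \<in># M"
  shows "(M - {#v#}, S - {v}) \<in> overpartitions_bounded m (s - v)"
proof -
  have M: "\<forall>x\<in>#M. 0 < x \<and> x \<le> m" "sum_mset M = s" "S \<subseteq> set_mset M"
    using p by (auto simp: overpartitions_bounded_def)
  have Md: "M = add_mset v (M - {#v#})"
    using v by simp
  have "s = v + sum_mset (M - {#v#})"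
    using M(2) by (subst (asm) Md) simp
  hence "sum_mset (M - {#v#}) = s - v"
    by simp
  moreover have "S - {v} \<subseteq> set_mset (M - {#v#})"
  proof
    fix x assume "x \<in> S - {v}"
    hence "x \<in># M" "x \<noteq> v"
      using M(3) by auto
    thus "x \<in># M - {#v#}"
      by (simp add: in_diff_count)
  qed
  moreover have "\<forall>x\<in># M - {#v#}. 0 < x \<and> x \<le> m"
    using M(1) by (auto dest: in_diffD)
  ultimately show ?thesis
    by (simp add: overpartitions_bounded_def)
qed

lemma bij_betw_remove_part:
  assumes v: "1 \<le> v" "v \<le> m" "v \<le> s"
  shows "bij_betw (\<lambda>(M, S). (M - {#v#}, S - {v}))
           {p \<in> overpartitions_bounded m s. v \<in># fst p \<and> (v \<in> snd p \<longleftrightarrow> b)}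
           {p \<in> overpartitions_bounded m (s - v). v \<notin> snd p}"
    (is "bij_betw ?remove ?A ?B")
proof (rule bij_betw_byWitness[where f' = "\<lambda>(M, S). (add_mset v M, if b then insert v S else S)"])
  let ?add = "\<lambda>(M, S). (add_mset v M, if b then insert v S else S)"
  show "\<forall>p\<in>?A. ?add (?remove p) = p"
  proof
    fix p assume p: "p \<in> ?A"
    obtain M S where MS: "p = (M, S)"
      by (cases p)
    have "add_mset v (M - {#v#}) = M" "(if b then insert v (S - {v}) else S - {v}) = S"
      using p unfolding MS by auto
    thus "?add (?remove p) = p"
      unfolding MS by simp
  qed
  show "\<forall>p\<in>?B. ?remove (?add p) = p"
    by (simp split: prod.split)
  show "?remove ` ?A \<subseteq> ?B"
  proof (rule image_subsetI)
    fix p assume "p \<in> ?A"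
    then obtain M S where MS: "p = (M, S)" "(M, S) \<in> overpartitions_bounded m s" "v \<in># M"
      by (cases p) auto
    show "?remove p \<in> ?B"
      using remove_part_overpartitions_bounded[OF MS(2,3)] MS(1) by simp
  qed
  show "?add ` ?B \<subseteq> ?A"
    using v by (auto simp: overpartitions_bounded_def split: if_splits)
qed

lemma card_overpartitions_with_part:
  assumes "1 \<le> v" "v \<le> m"
  shows "card {p \<in> overpartitions_bounded m s. v \<in># fst p \<and> (v \<in> snd p \<longleftrightarrow> b)} =
    (if v \<le> s then card {p \<in> overpartitions_bounded m (s - v). v \<notin> snd p} else 0)"
proof (cases "v \<le> s")
  case True
  then show ?thesis
    using bij_betw_same_card[OF bij_betw_remove_part[OF assms True]] by simp
next
  case False
  have empty: "{p \<in> overpartitions_bounded m s. v \<in># fst p \<and> (v \<in> snd p \<longleftrightarrow> b)} = {}"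
  proof (rule ccontr)
    assume "{p \<in> overpartitions_bounded m s. v \<in># fst p \<and> (v \<in> snd p \<longleftrightarrow> b)} \<noteq> {}"
    then obtain M S where "(M, S) \<in> overpartitions_bounded m s" "v \<in># M"
      by auto
    hence "v \<le> s"
      by (auto simp: overpartitions_bounded_def dest!: multi_member_split)
    with False show False
      by simp
  qed
  show ?thesis
    unfolding empty using False by simp
qed

definition overpartition_series :: "nat \<Rightarrow> (nat multiset \<times> nat set \<Rightarrow> bool) \<Rightarrow> rat fps" where
  "overpartition_series m P = Abs_fps (\<lambda>s. of_nat (card {p \<in> overpartitions_bounded m s. P p}))"

lemma overpartition_series_nth: "overpartition_series m P $ s = of_nat (card {p \<in> overpartitions_bounded m s. P p})"
  by (simp add: overpartition_series_def)

lemma overpartition_series_cong: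
  "(\<And>s p. p \<in> overpartitions_bounded m s \<Longrightarrow> P p \<longleftrightarrow> Q p) \<Longrightarrow> overpartition_series m P = overpartition_series m Q"
  unfolding overpartition_series_def by (metis (mono_tags, lifting) Collect_cong)

lemma overpartition_series_split:
  "overpartition_series m P = overpartition_series m (\<lambda>p. P p \<and> Q p) + overpartition_series m (\<lambda>p. P p \<and> \<not> Q p)"
proof (rule fps_ext)
  fix s
  have "{p \<in> overpartitions_bounded m s. P p} =
      {p \<in> overpartitions_bounded m s. P p \<and> Q p} \<union> {p \<in> overpartitions_bounded m s. P p \<and> \<not> Q p}"
    by blast
  moreover have "card ({p \<in> overpartitions_bounded m s. P p \<and> Q p} \<union>
      {p \<in> overpartitions_bounded m s. P p \<and> \<not> Q p}) =
      card {p \<in> overpartitions_bounded m s. P p \<and> Q p} +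
      card {p \<in> overpartitions_bounded m s. P p \<and> \<not> Q p}"
    by (rule card_Un_disjoint) (auto intro: finite_subset[OF _ finite_overpartitions_bounded])
  ultimately show "overpartition_series m P $ s =
      (overpartition_series m (\<lambda>p. P p \<and> Q p) + overpartition_series m (\<lambda>p. P p \<and> \<not> Q p)) $ s"
    by (simp add: overpartition_series_nth)
qed

lemma overpartition_series_with_part:
  assumes "1 \<le> v" "v \<le> m"
  shows "overpartition_series m (\<lambda>p. v \<in># fst p \<and> (v \<in> snd p \<longleftrightarrow> b)) =
    fps_X ^ v * overpartition_series m (\<lambda>p. v \<notin> snd p)"
  by (rule fps_ext)
    (simp add: overpartition_series_nth fps_X_power_mult_nth card_overpartitions_with_part[OF assms])

lemma overpartition_series_overlined:
  assumes "1 \<le> v" "v \<le> m"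
  shows "overpartition_series m (\<lambda>p. v \<in> snd p) = fps_X ^ v * overpartition_series m (\<lambda>p. v \<notin> snd p)"
proof -
  have "overpartition_series m (\<lambda>p. v \<in> snd p) = overpartition_series m (\<lambda>p. v \<in># fst p \<and> (v \<in> snd p \<longleftrightarrow> True))"
    by (rule overpartition_series_cong) (auto simp: overpartitions_bounded_def)
  thus ?thesis
    using overpartition_series_with_part[OF assms, of True] by simp
qed

lemma overpartition_series_not_overlined:
  assumes "1 \<le> v" "v \<le> m"
  shows "overpartition_series m (\<lambda>p. v \<notin> snd p) * (1 + fps_X ^ v) = overpartition_series m (\<lambda>_. True)"
  using overpartition_series_split[of m "\<lambda>_. True" "\<lambda>p. v \<notin> snd p"] overpartition_series_overlined[OF assms]
  by (simp add: algebra_simps)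

lemma overpartition_series_0: "overpartition_series 0 (\<lambda>_. True) = 1"
  by (rule fps_ext) (simp add: overpartition_series_nth overpartitions_bounded_0)

lemma overpartition_series_step:
  assumes m: "1 \<le> m"
  shows "overpartition_series m (\<lambda>_. True) * (1 - fps_X ^ m) =
    overpartition_series (m - 1) (\<lambda>_. True) * (1 + fps_X ^ m)"
proof -
  define A where "A = overpartition_series m (\<lambda>_. True)"
  define U where "U = overpartition_series m (\<lambda>p. m \<notin> snd p)"
  have without: "overpartition_series m (\<lambda>p. m \<notin># fst p) = overpartition_series (m - 1) (\<lambda>_. True)"
    by (rule fps_ext) (simp add: overpartition_series_nth overpartitions_bounded_without_max[OF m])
  have "overpartition_series m (\<lambda>p. m \<in># fst p) =
      overpartition_series m (\<lambda>p. m \<in># fst p \<and> (m \<in> snd p \<longleftrightarrow> True)) +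
      overpartition_series m (\<lambda>p. m \<in># fst p \<and> (m \<in> snd p \<longleftrightarrow> False))"
    using overpartition_series_split[of m "\<lambda>p. m \<in># fst p" "\<lambda>p. m \<in> snd p"] by simp
  also have "\<dots> = 2 * fps_X ^ m * U"
    unfolding overpartition_series_with_part[OF m order.refl] U_def by (simp only: mult_2 distrib_right)
  finally have with_max: "overpartition_series m (\<lambda>p. m \<in># fst p) = 2 * fps_X ^ m * U" .
  have "A = overpartition_series m (\<lambda>p. m \<notin># fst p) + overpartition_series m (\<lambda>p. m \<in># fst p)"
    using overpartition_series_split[of m "\<lambda>_. True" "\<lambda>p. m \<notin># fst p"] by (simp add: A_def)
  hence A_eq: "A - 2 * fps_X ^ m * U = overpartition_series (m - 1) (\<lambda>_. True)"
    unfolding without with_max by simp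
  have U_eq: "U * (1 + fps_X ^ m) = A"
    unfolding U_def A_def by (rule overpartition_series_not_overlined[OF m order.refl])
  have "A * (1 - fps_X ^ m) = A * (1 + fps_X ^ m) - 2 * fps_X ^ m * A"
    by (simp add: algebra_simps)
  also have "\<dots> = A * (1 + fps_X ^ m) - 2 * fps_X ^ m * (U * (1 + fps_X ^ m))"
    by (simp only: U_eq)
  also have "\<dots> = (A - 2 * fps_X ^ m * U) * (1 + fps_X ^ m)"
    by (simp add: algebra_simps)
  finally show ?thesis
    unfolding A_eq by (simp only: A_def)
qed

lemma overpartition_series_eq_pbar_prod: "overpartition_series N (\<lambda>_. True) = pbar_prod N"
proof -
  have "overpartition_series N (\<lambda>_. True) * (\<Prod>i<N. 1 - fps_X ^ Suc i) = (\<Prod>i<N. 1 + fps_X ^ Suc i)"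
  proof (induction N)
    case (Suc N)
    have step: "overpartition_series (Suc N) (\<lambda>_. True) * (1 - fps_X ^ Suc N) =
        overpartition_series N (\<lambda>_. True) * (1 + fps_X ^ Suc N)"
      using overpartition_series_step[of "Suc N"] by simp
    have "overpartition_series (Suc N) (\<lambda>_. True) * (\<Prod>i<Suc N. 1 - fps_X ^ Suc i) =
        (overpartition_series (Suc N) (\<lambda>_. True) * (1 - fps_X ^ Suc N)) * (\<Prod>i<N. 1 - fps_X ^ Suc i)"
      by (simp only: prod.lessThan_Suc mult_ac)
    also have "\<dots> = (1 + fps_X ^ Suc N) * (overpartition_series N (\<lambda>_. True) * (\<Prod>i<N. 1 - fps_X ^ Suc i))"
      by (simp only: step mult_ac)
    also have "\<dots> = (\<Prod>i<Suc N. 1 + fps_X ^ Suc i)"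
      by (simp only: Suc.IH prod.lessThan_Suc mult.commute)
    finally show ?case .
  qed (simp add: overpartition_series_0)
  thus ?thesis
    unfolding pbar_prod_def by (rule fps_eq_mult_inverse) (simp add: fps_prod_nth_0)
qed

lemma overpartition_series_overlined_eq:
  assumes "1 \<le> v" "v \<le> m"
  shows "overpartition_series m (\<lambda>p. v \<in> snd p) =
    overpartition_series m (\<lambda>_. True) * fps_dilated v (\<lambda>u. if u = 0 then 0 else (-1) ^ (u + 1))"
proof -
  have "overpartition_series m (\<lambda>p. v \<notin> snd p) = overpartition_series m (\<lambda>_. True) * inverse (1 + fps_X ^ v)"
    using overpartition_series_not_overlined[OF assms] by (rule fps_eq_mult_inverse) simp
  thus ?thesis
    using assms by (simp add: overpartition_series_overlined fps_dilated_alternating mult_ac)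
qed

lemma sorted_desc_unique:
  fixes xs ys :: "'a::linorder list"
  assumes "sorted_wrt (\<ge>) xs" "sorted_wrt (\<ge>) ys" "mset xs = mset ys"
  shows "xs = ys"
proof -
  have "sorted (rev xs)" "sorted (rev ys)"
    using assms(1,2) by (simp_all add: sorted_wrt_rev)
  with assms(3) have "rev xs = rev ys"
    by (metis mset_rev sorted_sort_id properties_for_sort)
  thus ?thesis
    by simp
qed

lemma bij_betw_mset_overpartitions:
  "bij_betw (\<lambda>(xs, S). (mset xs, S)) (overpartitions n) (overpartitions_bounded n n)"
proof (rule bij_betw_imageI)
  show "inj_on (\<lambda>(xs, S). (mset xs, S)) (overpartitions n)"
    by (auto simp: inj_on_def overpartitions_def intro: sorted_desc_unique)
  show "(\<lambda>(xs, S). (mset xs, S)) ` overpartitions n = overpartitions_bounded n n"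
  proof
    show "(\<lambda>(xs, S). (mset xs, S)) ` overpartitions n \<subseteq> overpartitions_bounded n n"
      by (auto simp: overpartitions_def overpartitions_bounded_def sum_mset_sum_list
          member_le_sum_list)
    show "overpartitions_bounded n n \<subseteq> (\<lambda>(xs, S). (mset xs, S)) ` overpartitions n"
    proof clarify
      fix M S assume "(M, S) \<in> overpartitions_bounded n n"
      hence "(rev (sorted_list_of_multiset M), S) \<in> overpartitions n"
        by (auto simp: overpartitions_def overpartitions_bounded_def sorted_wrt_rev
            sum_mset_sum_list[symmetric])
      thus "(M, S) \<in> (\<lambda>(xs, S). (mset xs, S)) ` overpartitions n"
        by (intro image_eqI[of _ _ "(rev (sorted_list_of_multiset M), S)"]) auto
    qed
  qed
qed

lemma ov_eq_sum_card:
  "ov k n = (\<Sum>v | v \<in> {1..n} \<and> k dvd v. v * card {p \<in> overpartitions_bounded n n. v \<in> snd p})"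
proof -
  define B where "B = {v \<in> {1..n}. k dvd v}"
  have "ov k n = (\<Sum>p\<in>overpartitions_bounded n n. \<Sum>v\<in>{v \<in> snd p. k dvd v}. v)"
    unfolding ov_def
    using sum.reindex_bij_betw[OF bij_betw_mset_overpartitions,
        of "\<lambda>p. \<Sum>v\<in>{v \<in> snd p. k dvd v}. v"]
    by (simp add: case_prod_unfold)
  also have "\<dots> = (\<Sum>p\<in>overpartitions_bounded n n. \<Sum>v\<in>{v \<in> B. v \<in> snd p}. v)"
  proof (rule sum.cong[OF refl])
    fix p assume "p \<in> overpartitions_bounded n n"
    then obtain M S where MS: "p = (M, S)" "\<forall>x\<in>#M. 0 < x \<and> x \<le> n" "S \<subseteq> set_mset M"
      by (auto simp: overpartitions_bounded_def)
    have "snd p \<subseteq> {1..n}"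
    proof
      fix x assume "x \<in> snd p"
      with MS have "x \<in># M"
        by auto
      with MS show "x \<in> {1..n}"
        by auto
    qed
    hence "{v \<in> snd p. k dvd v} = {v \<in> B. v \<in> snd p}"
      by (auto simp: B_def)
    thus "(\<Sum>v\<in>{v \<in> snd p. k dvd v}. v) = (\<Sum>v\<in>{v \<in> B. v \<in> snd p}. v)"
      by simp
  qed
  also have "\<dots> = (\<Sum>v\<in>B. \<Sum>p\<in>{p \<in> overpartitions_bounded n n. v \<in> snd p}. v)"
    by (rule sum.swap_restrict) (simp_all add: B_def finite_overpartitions_bounded)
  also have "\<dots> = (\<Sum>v\<in>B. v * card {p \<in> overpartitions_bounded n n. v \<in> snd p})"
    by (simp add: mult.commute)
  finally show ?thesis
    by (simp add: B_def)
qed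

lemma ov_eq_nth:
  "rat_of_nat (ov k n) = (pbar_prod n *
     (\<Sum>v | v \<in> {1..n} \<and> k dvd v.
        fps_const (of_nat v) * fps_dilated v (\<lambda>u. if u = 0 then 0 else (-1) ^ (u + 1)))) $ n"
proof -
  have "rat_of_nat (ov k n) =
      (\<Sum>v | v \<in> {1..n} \<and> k dvd v. of_nat v * overpartition_series n (\<lambda>p. v \<in> snd p) $ n)"
    by (simp add: ov_eq_sum_card overpartition_series_nth)
  also have "\<dots> = (\<Sum>v | v \<in> {1..n} \<and> k dvd v. of_nat v *
      (pbar_prod n * fps_dilated v (\<lambda>u. if u = 0 then 0 else (-1) ^ (u + 1))) $ n)"
    by (intro sum.cong refl) (simp add: overpartition_series_overlined_eq overpartition_series_eq_pbar_prod)
  finally show ?thesis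
    by (simp add: sum_distrib_left fps_sum_nth mult.left_commute[of "pbar_prod n"])
qed

section \<open>Divisor sums\<close>

lemma sum_quotients_multiples:
  fixes c t n :: nat
  assumes c: "0 < c" and t: "0 < t" "t \<le> n"
  shows "(\<Sum>i | i < n \<and> c * Suc i dvd t. c * (t div (c * Suc i))) =
         (\<Sum>v | v \<in> {1..n} \<and> c dvd v \<and> v dvd t. v)"
proof (rule sum.reindex_bij_witness[where j = "\<lambda>i. t div Suc i" and i = "\<lambda>v. t div v - 1"])
  fix i assume "i \<in> {i. i < n \<and> c * Suc i dvd t}"
  then obtain e where e: "t = c * Suc i * e"
    by blast
  have "0 < e"
    using e t by (intro gr0I) simp
  have "t = Suc i * (c * e)"
    using e by (simp only: mult.commute mult.left_commute)
  hence quot: "t div Suc i = c * e"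
    by (metis nonzero_mult_div_cancel_left nat.simps(3))
  show "t div (t div Suc i) - 1 = i"
    unfolding quot using c \<open>0 < e\<close> by (simp add: e)
  have "c * e \<le> t"
    using div_le_dividend[of t "Suc i"] unfolding quot .
  moreover have "c * e dvd t"
    using e by simp
  ultimately show "t div Suc i \<in> {v. v \<in> {1..n} \<and> c dvd v \<and> v dvd t}"
    unfolding quot using c \<open>0 < e\<close> t by simp
  show "t div Suc i = c * (t div (c * Suc i))"
    unfolding quot using c by (simp add: e)
next
  fix v assume "v \<in> {v. v \<in> {1..n} \<and> c dvd v \<and> v dvd t}"
  then obtain f g where v: "1 \<le> v" "v \<le> n" "v = c * f" "t = v * g"
    by (auto elim!: dvdE)
  have "0 < g"
    using v t by (intro gr0I) simp
  have quot: "t div v = g"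
    using v by simp
  show "t div (Suc (t div v - 1)) = v"
    unfolding quot using \<open>0 < g\<close> v by simp
  have g: "Suc (g - 1) = g"
    using \<open>0 < g\<close> by simp
  have "g \<le> t"
    using v by simp
  hence "g - 1 < n"
    using \<open>0 < g\<close> t by linarith
  moreover have "c * g dvd t"
    using v by (simp add: mult.commute mult.left_commute)
  ultimately show "t div v - 1 \<in> {i. i < n \<and> c * Suc i dvd t}"
    unfolding quot mem_Collect_eq g by blast
qed

lemma sum_dilated_of_nat_nth:
  fixes c t n :: nat
  assumes "0 < c" "0 < t" "t \<le> n"
  shows "of_nat c * (\<Sum>i<n. fps_dilated (c * Suc i) of_nat) $ t =
         (of_nat (\<Sum>v | v \<in> {1..n} \<and> c dvd v \<and> v dvd t. v) :: rat)"
proof -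
  have "of_nat c * (\<Sum>i<n. fps_dilated (c * Suc i) of_nat) $ t =
      (\<Sum>i<n. if c * Suc i dvd t then of_nat (c * (t div (c * Suc i))) else (0 :: rat))"
    unfolding fps_sum_nth fps_dilated_nth sum_distrib_left by (intro sum.cong refl) simp
  also have "\<dots> = of_nat (\<Sum>i | i < n \<and> c * Suc i dvd t. c * (t div (c * Suc i)))"
    by (simp add: sum.inter_filter[symmetric] conj_commute)
  also have "\<dots> = of_nat (\<Sum>v | v \<in> {1..n} \<and> c dvd v \<and> v dvd t. v)"
    using sum_quotients_multiples[OF assms] by simp
  finally show ?thesis .
qed

lemma sum_even_cofactor_divisors:
  fixes k t n :: nat
  assumes "0 < t" "t \<le> n"
  shows "(\<Sum>v | (v \<in> {1..n} \<and> k dvd v \<and> v dvd t) \<and> even (t div v). 2 * v) =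
         (\<Sum>w | w \<in> {1..n} \<and> 2 * k dvd w \<and> w dvd t. w)"
proof (rule sum.reindex_bij_witness[where i = "\<lambda>w. w div 2" and j = "\<lambda>v. 2 * v"])
  fix v assume "v \<in> {v. (v \<in> {1..n} \<and> k dvd v \<and> v dvd t) \<and> even (t div v)}"
  then obtain h where v: "1 \<le> v" "k dvd v" "t = (2 * v) * h"
    by (auto elim!: dvdE evenE simp: mult.assoc)
  have "2 * v \<le> t"
    using v assms by (intro dvd_imp_le) simp_all
  hence "2 * v \<le> n"
    using assms by linarith
  thus "2 * v \<in> {w. w \<in> {1..n} \<and> 2 * k dvd w \<and> w dvd t}"
    using v assms by auto
  show "2 * v div 2 = v"
    by simp
next
  fix w assume "w \<in> {w. w \<in> {1..n} \<and> 2 * k dvd w \<and> w dvd t}"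
  then obtain f g where w: "1 \<le> w" "w \<le> n" "w = 2 * (k * f)" "t = w * g"
    by (auto elim!: dvdE simp: mult.assoc)
  have "0 < k * f"
    using w by (intro gr0I) simp
  have "t div (k * f) = 2 * g"
    using w \<open>0 < k * f\<close> by (simp add: mult_ac)
  thus "w div 2 \<in> {v. (v \<in> {1..n} \<and> k dvd v \<and> v dvd t) \<and> even (t div v)}"
    using w \<open>0 < k * f\<close> by auto
  show "2 * (w div 2) = w"
    using w by simp
qed simp

lemma sum_alternating_divisors:
  fixes k t n :: nat
  assumes "0 < t" "t \<le> n"
  shows "(\<Sum>v | v \<in> {1..n} \<and> k dvd v \<and> v dvd t. of_nat v * (-1) ^ (t div v + 1) :: rat) =
         of_nat (\<Sum>v | v \<in> {1..n} \<and> k dvd v \<and> v dvd t. v) -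
         of_nat (\<Sum>w | w \<in> {1..n} \<and> 2 * k dvd w \<and> w dvd t. w)"
proof -
  define V where "V = {v. v \<in> {1..n} \<and> k dvd v \<and> v dvd t}"
  have "finite V"
    by (simp add: V_def)
  have "(\<Sum>v\<in>V. of_nat v * (-1) ^ (t div v + 1) :: rat) =
      (\<Sum>v\<in>V. of_nat v - (if even (t div v) then of_nat (2 * v) else 0))"
    by (intro sum.cong refl) auto
  also have "\<dots> = of_nat (\<Sum>v\<in>V. v) - of_nat (\<Sum>v | v \<in> V \<and> even (t div v). 2 * v)"
    using \<open>finite V\<close> by (simp add: sum_subtractf sum.inter_filter[symmetric])
  also have "\<dots> = of_nat (\<Sum>v\<in>V. v) - of_nat (\<Sum>w | w \<in> {1..n} \<and> 2 * k dvd w \<and> w dvd t. w)"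
    using sum_even_cofactor_divisors[OF assms, of k] unfolding V_def by (simp only: mem_Collect_eq)
  finally show ?thesis
    by (simp only: V_def)
qed

lemma alternating_series_eq_upto:
  fixes k n :: nat
  assumes k: "0 < k"
  shows "fps_eq_upto n
    (\<Sum>v | v \<in> {1..n} \<and> k dvd v.
       fps_const (of_nat v) * fps_dilated v (\<lambda>u. if u = 0 then 0 else (-1) ^ (u + 1)))
    (fps_const (of_nat k) * (\<Sum>i<n. fps_dilated (k * Suc i) of_nat) -
     fps_const (of_nat (2 * k)) * (\<Sum>i<n. fps_dilated (2 * k * Suc i) of_nat) :: rat fps)"
    (is "fps_eq_upto n ?F ?G")
  unfolding fps_eq_upto_def
proof (intro allI impI)
  fix t assume "t \<le> n"
  show "?F $ t = ?G $ t"
  proof (cases "t = 0")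
    case True
    have "fps_dilated a (of_nat :: nat \<Rightarrow> rat) $ 0 = 0"
      "fps_dilated a (\<lambda>u. if u = 0 then 0 else (-1) ^ (u + 1) :: rat) $ 0 = 0" for a
      by (simp_all add: fps_dilated_nth)
    thus ?thesis
      using True by (simp add: fps_sum_nth)
  next
    case False
    hence t: "0 < t" "t \<le> n"
      using \<open>t \<le> n\<close> by simp_all
    have "?F $ t =
        (\<Sum>v | v \<in> {1..n} \<and> k dvd v. if v dvd t then of_nat v * (-1) ^ (t div v + 1) else 0)"
      unfolding fps_sum_nth using t
      by (intro sum.cong refl) (auto simp: fps_dilated_nth elim!: dvdE)
    also have "\<dots> = (\<Sum>v | v \<in> {1..n} \<and> k dvd v \<and> v dvd t. of_nat v * (-1) ^ (t div v + 1))"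
      by (simp add: sum.inter_filter[symmetric] conj_assoc)
    also have "\<dots> = ?G $ t"
      using sum_alternating_divisors[OF t, of k] sum_dilated_of_nat_nth[OF k t]
        sum_dilated_of_nat_nth[of "2 * k", OF _ t] k
      by simp
    finally show ?thesis .
  qed
qed

theorem mainTheorem4:
  fixes k n :: nat
  assumes "k \<ge> 1"
  shows "rat_of_nat (ov k n) = rat_of_nat k / 2 * Mbar2 k n - rat_of_nat k * Mbar2 (2 * k) n"
proof -
  define L where "L j = (\<Sum>i<n. fps_dilated (j * Suc i) of_nat :: rat fps)" for j
  have M: "Mbar2 j n = 2 * (pbar_prod n * L j) $ n" if "1 \<le> j" for j
    using Mbar2_eq[OF that, of n] by (simp add: L_def mult.assoc numeral_fps_const)
  have "rat_of_nat (ov k n) =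
      (pbar_prod n * (fps_const (of_nat k) * L k - fps_const (of_nat (2 * k)) * L (2 * k))) $ n"
    unfolding ov_eq_nth L_def
    using assms by (intro fps_eq_upto_nth fps_eq_upto_mult alternating_series_eq_upto) simp_all
  also have "\<dots> =
      of_nat k * (pbar_prod n * L k) $ n - 2 * of_nat k * (pbar_prod n * L (2 * k)) $ n"
    by (simp only: right_diff_distrib fps_sub_nth mult.left_commute[of "pbar_prod n"]
        fps_mult_left_const_nth of_nat_mult of_nat_numeral)
  finally show ?thesis
    using M[of k] M[of "2 * k"] assms by simp
qed

end
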